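(* Let $\mathcal N_{Y_1\cdots Y_K\mid X}$ and $\widetilde{\mathcal N}_{Y_1\cdots Y_K\mid X}$ be two discrete memoryless $K$-user broadcast channels with the same input alphabet and output alphabets, whose marginals coincide: $\mathcal N_{Y_k\mid X}=\widetilde{\mathcal N}_{Y_k\mid X}$ for all $k\in[K]$, where $\mathcal N_{Y_k\mid X}(y_k\mid x)=\sum_{(y_l)_{l\ne k}}\mathcal N(y_1,\dots,y_K\mid x)$. Then for any NS-assisted (or classical) coding scheme over $n$ channel uses, the error probability of the $k$-th message is the same when the scheme is used over $\mathcal N$ as when it is used over $\widetilde{\mathcal N}$, i.e. $P_{e,k}=\widetilde P_{e,k}$ for every $k\in[K]$.
   Context: A discrete memoryless $K$-user BC has input alphabet $\mathcal X$, output alphabets $\mathcal Y_k$ and transition law $\mathcal N(y_1,\dots,y_K\mid x)$, with $n$ uses given by $\mathcal N^{\otimes n}(y^{[n]}_{[K]}\mid x^{[n]})=\prod_{\tau=1}^n\mathcal N(y_1^{(\tau)},\dots,y_K^{(\tau)}\mid x^{(\tau)})$. Messages $W_1,\dots,W_K$ are independent, $W_k$ uniform on a finite nonempty set $\mathcal M_k$. A classical scheme: stochastic encoder $X^{[n]}=\phi(W_1,\dots,W_K)$ and stochastic decoders $\hat W_k=\psi_k(Y_k^{[n]})$. A $\kappa$-partite NS box is a conditional pmf $\mathcal Z(b_1,\dots,b_\kappa\mid a_1,\dots,a_\kappa)$ (finite output alphabets) such that for every subset of parties, the marginal of their outputs given all inputs depends only on their inputs. An NS-assisted scheme: a $(K+1)$-partite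 NS box where the transmitter inputs $(W_1,\dots,W_K)$ and obtains $U\in\mathcal X^n$, transmitting $X^{[n]}=U$; Rx-$k$ inputs $Y_k^{[n]}$ and obtains $\hat W_k\in\mathcal M_k$; joint law $\Pr(w,x^{[n]},y^{[n]}_{[K]},\hat w)=\frac{1}{\prod_k|\mathcal M_k|}\mathcal Z(x^{[n]},\hat w_{[K]}\mid w_{[K]},y^{[n]}_{[K]})\mathcal N^{\otimes n}(y^{[n]}_{[K]}\mid x^{[n]})$. The error probability of message $k$ is $P_{e,k}=\Pr(\hat W_k\ne W_k)$ ($\widetilde P_{e,k}$ over $\widetilde{\mathcal N}$). *)

theory Defs
  imports Complex_Main "HOL-Library.FuncSet"
begin

text \<open>Conventions: users are indexed by 1..K, channel uses (time) by 1..n.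
  A broadcast channel N maps an input x and an output tuple y (a function on {1..K},
  y k being the output of user k) to a probability.  The party 0 of the NS box is the
  transmitter, party k (1..K) is receiver k.\<close>

definition seqs :: "nat \<Rightarrow> 'a set \<Rightarrow> (nat \<Rightarrow> 'a) set" where
  "seqs n A = PiE {1..n} (\<lambda>_. A)"

definition is_BC :: "'x set \<Rightarrow> nat \<Rightarrow> (nat \<Rightarrow> 'y set) \<Rightarrow> ('x \<Rightarrow> (nat \<Rightarrow> 'y) \<Rightarrow> real) \<Rightarrow> bool" where
  "is_BC X K Y N \<longleftrightarrow> finite X \<and> (\<forall>k\<in>{1..K}. finite (Y k)) \<and>
     (\<forall>x\<in>X. (\<forall>y\<in>PiE {1..K} Y. N x y \<ge> 0) \<and> (\<Sum>y\<in>PiE {1..K} Y. N x y) = 1)"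

definition BC_marginal :: "nat \<Rightarrow> (nat \<Rightarrow> 'y set) \<Rightarrow> ('x \<Rightarrow> (nat \<Rightarrow> 'y) \<Rightarrow> real) \<Rightarrow> nat \<Rightarrow> 'x \<Rightarrow> 'y \<Rightarrow> real" where
  "BC_marginal K Y N k x yk = (\<Sum>y\<in>{y\<in>PiE {1..K} Y. y k = yk}. N x y)"

definition BC_n :: "nat \<Rightarrow> nat \<Rightarrow> ('x \<Rightarrow> (nat \<Rightarrow> 'y) \<Rightarrow> real) \<Rightarrow> (nat \<Rightarrow> 'x) \<Rightarrow> (nat \<Rightarrow> nat \<Rightarrow> 'y) \<Rightarrow> real" where
  "BC_n K n N xs ys = (\<Prod>\<tau>\<in>{1..n}. N (xs \<tau>) (\<lambda>k\<in>{1..K}. ys k \<tau>))"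

definition out_seqs :: "nat \<Rightarrow> nat \<Rightarrow> (nat \<Rightarrow> 'y set) \<Rightarrow> (nat \<Rightarrow> nat \<Rightarrow> 'y) set" where
  "out_seqs K n Y = PiE {1..K} (\<lambda>k. seqs n (Y k))"

text \<open>NS box Z u wh w ys: transmitter input w (message tuple), output u \<in> X^n;
  receiver k input ys k \<in> Y_k^n, output wh k \<in> M_k.\<close>
definition ns_in :: "nat \<Rightarrow> nat \<Rightarrow> (nat \<Rightarrow> 'm set) \<Rightarrow> (nat \<Rightarrow> 'y set) \<Rightarrow> ((nat \<Rightarrow> 'm) \<times> (nat \<Rightarrow> nat \<Rightarrow> 'y)) set" where
  "ns_in K n M Y = PiE {1..K} M \<times> out_seqs K n Y"

definition ns_out :: "'x set \<Rightarrow> nat \<Rightarrow> nat \<Rightarrow> (nat \<Rightarrow> 'm set) \<Rightarrow> ((nat \<Rightarrow> 'x) \<times> (nat \<Rightarrow> 'm)) set" where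
  "ns_out X K n M = seqs n X \<times> PiE {1..K} M"

definition ns_marg :: "'x set \<Rightarrow> nat \<Rightarrow> nat \<Rightarrow> (nat \<Rightarrow> 'm set)
    \<Rightarrow> ((nat \<Rightarrow> 'x) \<Rightarrow> (nat \<Rightarrow> 'm) \<Rightarrow> (nat \<Rightarrow> 'm) \<Rightarrow> (nat \<Rightarrow> nat \<Rightarrow> 'y) \<Rightarrow> real)
    \<Rightarrow> nat set \<Rightarrow> (nat \<Rightarrow> 'm) \<Rightarrow> (nat \<Rightarrow> nat \<Rightarrow> 'y) \<Rightarrow> (nat \<Rightarrow> 'x) \<Rightarrow> (nat \<Rightarrow> 'm) \<Rightarrow> real" where
  "ns_marg X K n M Z S w ys u wh =
     (\<Sum>(u', wh')\<in>{(u', wh')\<in>ns_out X K n M. (0 \<in> S \<longrightarrow> u' = u) \<and> (\<forall>k\<in>S - {0}. wh' k = wh k)}.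
        Z u' wh' w ys)"

definition is_NS_scheme :: "'x set \<Rightarrow> nat \<Rightarrow> nat \<Rightarrow> (nat \<Rightarrow> 'm set) \<Rightarrow> (nat \<Rightarrow> 'y set)
    \<Rightarrow> ((nat \<Rightarrow> 'x) \<Rightarrow> (nat \<Rightarrow> 'm) \<Rightarrow> (nat \<Rightarrow> 'm) \<Rightarrow> (nat \<Rightarrow> nat \<Rightarrow> 'y) \<Rightarrow> real) \<Rightarrow> bool" where
  "is_NS_scheme X K n M Y Z \<longleftrightarrow>
     (\<forall>(w, ys)\<in>ns_in K n M Y.
        (\<forall>(u, wh)\<in>ns_out X K n M. Z u wh w ys \<ge> 0) \<and>
        (\<Sum>(u, wh)\<in>ns_out X K n M. Z u wh w ys) = 1) \<and>
     (\<forall>S. S \<subseteq> {0..K} \<longrightarrow>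
        (\<forall>(w, ys)\<in>ns_in K n M Y. \<forall>(w', ys')\<in>ns_in K n M Y.
           ((0 \<in> S \<longrightarrow> w = w') \<and> (\<forall>k\<in>S - {0}. ys k = ys' k)) \<longrightarrow>
           (\<forall>(u, wh)\<in>ns_out X K n M.
              ns_marg X K n M Z S w ys u wh = ns_marg X K n M Z S w' ys' u wh)))"

definition Pe_NS :: "'x set \<Rightarrow> nat \<Rightarrow> nat \<Rightarrow> (nat \<Rightarrow> 'm set) \<Rightarrow> (nat \<Rightarrow> 'y set)
    \<Rightarrow> ('x \<Rightarrow> (nat \<Rightarrow> 'y) \<Rightarrow> real)
    \<Rightarrow> ((nat \<Rightarrow> 'x) \<Rightarrow> (nat \<Rightarrow> 'm) \<Rightarrow> (nat \<Rightarrow> 'm) \<Rightarrow> (nat \<Rightarrow> nat \<Rightarrow> 'y) \<Rightarrow> real) \<Rightarrow> nat \<Rightarrow> real" where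
  "Pe_NS X K n M Y N Z k =
     (1 / (\<Prod>j\<in>{1..K}. real (card (M j)))) *
     (\<Sum>w\<in>PiE {1..K} M. \<Sum>u\<in>seqs n X. \<Sum>ys\<in>out_seqs K n Y.
        \<Sum>wh\<in>{wh\<in>PiE {1..K} M. wh k \<noteq> w k}. Z u wh w ys * BC_n K n N u ys)"

definition is_classical_scheme :: "'x set \<Rightarrow> nat \<Rightarrow> nat \<Rightarrow> (nat \<Rightarrow> 'm set) \<Rightarrow> (nat \<Rightarrow> 'y set)
    \<Rightarrow> ((nat \<Rightarrow> 'm) \<Rightarrow> (nat \<Rightarrow> 'x) \<Rightarrow> real) \<Rightarrow> (nat \<Rightarrow> (nat \<Rightarrow> 'y) \<Rightarrow> 'm \<Rightarrow> real) \<Rightarrow> bool" where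
  "is_classical_scheme X K n M Y phi psi \<longleftrightarrow>
     (\<forall>w\<in>PiE {1..K} M. (\<forall>u\<in>seqs n X. phi w u \<ge> 0) \<and> (\<Sum>u\<in>seqs n X. phi w u) = 1) \<and>
     (\<forall>k\<in>{1..K}. \<forall>yk\<in>seqs n (Y k). (\<forall>m\<in>M k. psi k yk m \<ge> 0) \<and> (\<Sum>m\<in>M k. psi k yk m) = 1)"

definition Pe_classical :: "'x set \<Rightarrow> nat \<Rightarrow> nat \<Rightarrow> (nat \<Rightarrow> 'm set) \<Rightarrow> (nat \<Rightarrow> 'y set)
    \<Rightarrow> ('x \<Rightarrow> (nat \<Rightarrow> 'y) \<Rightarrow> real)
    \<Rightarrow> ((nat \<Rightarrow> 'm) \<Rightarrow> (nat \<Rightarrow> 'x) \<Rightarrow> real) \<Rightarrow> (nat \<Rightarrow> (nat \<Rightarrow> 'y) \<Rightarrow> 'm \<Rightarrow> real) \<Rightarrow> nat \<Rightarrow> real" where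
  "Pe_classical X K n M Y N phi psi k =
     (1 / (\<Prod>j\<in>{1..K}. real (card (M j)))) *
     (\<Sum>w\<in>PiE {1..K} M. \<Sum>u\<in>seqs n X. \<Sum>ys\<in>out_seqs K n Y.
        phi w u * BC_n K n N u ys * (\<Sum>m\<in>M k - {w k}. psi k (ys k) m))"

end

theory Submission
  imports Defs
begin

text \<open>Because the channel is memoryless, summing the n-fold channel over the outputs of all
  users but k leaves the n-fold product of the marginal channel of user k.  The error
  probability of message k integrates against the channel a quantity that depends on the
  outputs only through the output of user k: for a classical scheme this is the error
  probability of decoder k, and for an NS box it is the joint law of the transmitter's
  output and the decision of receiver k, which by no-signalling for the parties
  {0, k} does not depend on the inputs of the other receivers.  Hence only the
  marginals of the channel enter.\<close>

lemma finite_seqs: "finite A \<Longrightarrow> finite (seqs n A)"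
  unfolding seqs_def by (rule finite_PiE) auto

lemma finite_out_seqs: "\<forall>j\<in>{1..K}. finite (Y j) \<Longrightarrow> finite (out_seqs K n Y)"
  unfolding out_seqs_def by (rule finite_PiE) (auto intro: finite_seqs)

lemma bij_betw_transpose_out_seqs:
  assumes "k \<in> {1..K}" and "yk \<in> seqs n (Y k)"
  shows "bij_betw (\<lambda>ys. \<lambda>\<tau>\<in>{1..n}. \<lambda>j\<in>{1..K}. ys j \<tau>)
           {ys\<in>out_seqs K n Y. ys k = yk}
           (PiE {1..n} (\<lambda>\<tau>. {y\<in>PiE {1..K} Y. y k = yk \<tau>}))"
proof (rule bij_betw_byWitness[where f'="\<lambda>z. \<lambda>j\<in>{1..K}. \<lambda>\<tau>\<in>{1..n}. z \<tau> j"])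
  show "\<forall>ys\<in>{ys\<in>out_seqs K n Y. ys k = yk}.
          (\<lambda>j\<in>{1..K}. \<lambda>\<tau>\<in>{1..n}. (\<lambda>\<tau>\<in>{1..n}. \<lambda>j\<in>{1..K}. ys j \<tau>) \<tau> j) = ys"
    by (auto simp: out_seqs_def seqs_def PiE_iff extensional_def fun_eq_iff)
  show "\<forall>z\<in>PiE {1..n} (\<lambda>\<tau>. {y\<in>PiE {1..K} Y. y k = yk \<tau>}).
          (\<lambda>\<tau>\<in>{1..n}. \<lambda>j\<in>{1..K}. (\<lambda>j\<in>{1..K}. \<lambda>\<tau>\<in>{1..n}. z \<tau> j) j \<tau>) = z"
    by (auto simp: PiE_iff extensional_def fun_eq_iff)
  show "(\<lambda>ys. \<lambda>\<tau>\<in>{1..n}. \<lambda>j\<in>{1..K}. ys j \<tau>) ` {ys\<in>out_seqs K n Y. ys k = yk}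
          \<subseteq> PiE {1..n} (\<lambda>\<tau>. {y\<in>PiE {1..K} Y. y k = yk \<tau>})"
    using assms(1) by (auto simp: out_seqs_def seqs_def PiE_iff)
  show "(\<lambda>z. \<lambda>j\<in>{1..K}. \<lambda>\<tau>\<in>{1..n}. z \<tau> j) ` PiE {1..n} (\<lambda>\<tau>. {y\<in>PiE {1..K} Y. y k = yk \<tau>})
          \<subseteq> {ys\<in>out_seqs K n Y. ys k = yk}"
    using assms by (auto simp: out_seqs_def seqs_def PiE_iff extensional_def fun_eq_iff)
qed

lemma sum_BC_n_fiber_eq_prod_BC_marginal:
  assumes fin: "\<forall>j\<in>{1..K}. finite (Y j)" and k: "k \<in> {1..K}" and yk: "yk \<in> seqs n (Y k)"
  shows "(\<Sum>ys\<in>{ys\<in>out_seqs K n Y. ys k = yk}. BC_n K n N u ys)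
       = (\<Prod>\<tau>\<in>{1..n}. BC_marginal K Y N k (u \<tau>) (yk \<tau>))"
proof -
  let ?A = "\<lambda>\<tau>. {y\<in>PiE {1..K} Y. y k = yk \<tau>}"
  have "finite (PiE {1..K} Y)"
    using fin by (intro finite_PiE) auto
  then have fin_A: "finite (?A \<tau>)" for \<tau>
    by (rule finite_subset[rotated]) auto
  have "(\<Sum>ys\<in>{ys\<in>out_seqs K n Y. ys k = yk}. BC_n K n N u ys)
      = (\<Sum>ys\<in>{ys\<in>out_seqs K n Y. ys k = yk}.
           (\<lambda>z. \<Prod>\<tau>\<in>{1..n}. N (u \<tau>) (z \<tau>)) (\<lambda>\<tau>\<in>{1..n}. \<lambda>j\<in>{1..K}. ys j \<tau>))"
    unfolding BC_n_def by (auto intro!: sum.cong prod.cong)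
  also have "\<dots> = (\<Sum>z\<in>PiE {1..n} ?A. \<Prod>\<tau>\<in>{1..n}. N (u \<tau>) (z \<tau>))"
    by (rule sum.reindex_bij_betw[OF bij_betw_transpose_out_seqs[where Y=Y and k=k, OF k yk]])
  also have "\<dots> = (\<Prod>\<tau>\<in>{1..n}. \<Sum>y\<in>?A \<tau>. N (u \<tau>) y)"
    by (rule prod_sum_PiE[symmetric]) (simp, rule fin_A)
  finally show ?thesis
    unfolding BC_marginal_def .
qed

lemma sum_BC_n_coordinate:
  assumes fin: "\<forall>j\<in>{1..K}. finite (Y j)" and k: "k \<in> {1..K}"
  shows "(\<Sum>ys\<in>out_seqs K n Y. g (ys k) * BC_n K n N u ys)
       = (\<Sum>yk\<in>seqs n (Y k). g yk * (\<Prod>\<tau>\<in>{1..n}. BC_marginal K Y N k (u \<tau>) (yk \<tau>)))"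
proof -
  have "(\<Sum>ys\<in>out_seqs K n Y. g (ys k) * BC_n K n N u ys)
      = (\<Sum>yk\<in>seqs n (Y k). \<Sum>ys\<in>{ys\<in>out_seqs K n Y. ys k = yk}. g (ys k) * BC_n K n N u ys)"
    using fin k by (intro sum.group[symmetric] finite_out_seqs finite_seqs)
      (auto simp: out_seqs_def)
  also have "\<dots> = (\<Sum>yk\<in>seqs n (Y k). g yk * (\<Sum>ys\<in>{ys\<in>out_seqs K n Y. ys k = yk}. BC_n K n N u ys))"
    by (auto simp: sum_distrib_left intro!: sum.cong)
  finally show ?thesis
    by (simp add: sum_BC_n_fiber_eq_prod_BC_marginal[OF fin k])
qed

lemma sum_BC_n_eq_if_BC_marginal_eq:
  assumes fin: "\<forall>j\<in>{1..K}. finite (Y j)" and k: "k \<in> {1..K}" and u: "u \<in> seqs n X"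
    and marginal_eq: "\<forall>x\<in>X. \<forall>y\<in>Y k. BC_marginal K Y N k x y = BC_marginal K Y Nt k x y"
    and local: "\<And>ys ys'. ys \<in> out_seqs K n Y \<Longrightarrow> ys' \<in> out_seqs K n Y \<Longrightarrow> ys k = ys' k \<Longrightarrow> f ys = f ys'"
  shows "(\<Sum>ys\<in>out_seqs K n Y. f ys * BC_n K n N u ys)
       = (\<Sum>ys\<in>out_seqs K n Y. f ys * BC_n K n Nt u ys)"
proof -
  define g where "g yk = f (SOME ys. ys \<in> out_seqs K n Y \<and> ys k = yk)" for yk
  have f_eq_g: "f ys = g (ys k)" if ys: "ys \<in> out_seqs K n Y" for ys
  proof -
    let ?s = "SOME ys'. ys' \<in> out_seqs K n Y \<and> ys' k = ys k"
    have "?s \<in> out_seqs K n Y \<and> ?s k = ys k"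
      by (rule someI[of _ ys]) (use ys in simp)
    then show ?thesis
      unfolding g_def using local[OF ys, of ?s] by simp
  qed
  have sum_eq: "(\<Sum>ys\<in>out_seqs K n Y. f ys * BC_n K n NN u ys)
      = (\<Sum>yk\<in>seqs n (Y k). g yk * (\<Prod>\<tau>\<in>{1..n}. BC_marginal K Y NN k (u \<tau>) (yk \<tau>)))" for NN
  proof -
    have "(\<Sum>ys\<in>out_seqs K n Y. f ys * BC_n K n NN u ys)
        = (\<Sum>ys\<in>out_seqs K n Y. g (ys k) * BC_n K n NN u ys)"
      by (rule sum.cong[OF refl]) (simp add: f_eq_g)
    also have "\<dots> = (\<Sum>yk\<in>seqs n (Y k). g yk * (\<Prod>\<tau>\<in>{1..n}. BC_marginal K Y NN k (u \<tau>) (yk \<tau>)))"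
      by (rule sum_BC_n_coordinate[OF fin k])
    finally show ?thesis .
  qed
  have "(\<Prod>\<tau>\<in>{1..n}. BC_marginal K Y N k (u \<tau>) (yk \<tau>)) = (\<Prod>\<tau>\<in>{1..n}. BC_marginal K Y Nt k (u \<tau>) (yk \<tau>))"
    if "yk \<in> seqs n (Y k)" for yk
    using that u marginal_eq by (intro prod.cong refl) (auto simp: seqs_def PiE_iff)
  then show ?thesis
    unfolding sum_eq by (simp cong: sum.cong)
qed

lemma ns_marg_receiver:
  assumes "k \<in> {1..K}" and "u \<in> seqs n X"
  shows "ns_marg X K n M Z {0,k} w ys u wh0 = (\<Sum>wh\<in>{wh\<in>PiE {1..K} M. wh k = wh0 k}. Z u wh w ys)"
proof -
  have "{(u', wh'). (u', wh') \<in> ns_out X K n M \<and> (0 \<in> {0,k} \<longrightarrow> u' = u) \<and> (\<forall>j\<in>{0,k} - {0}. wh' j = wh0 j)}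
      = Pair u ` {wh\<in>PiE {1..K} M. wh k = wh0 k}"
    using assms by (auto simp: ns_out_def)
  then show ?thesis
    unfolding ns_marg_def by (simp add: sum.reindex inj_on_def)
qed

lemma NS_scheme_receiver_local:
  assumes ns: "is_NS_scheme X K n M Y Z" and k: "k \<in> {1..K}"
    and w: "w \<in> PiE {1..K} M" and u: "u \<in> seqs n X" and m: "m \<in> M k"
    and ys: "ys \<in> out_seqs K n Y" and ys': "ys' \<in> out_seqs K n Y" and eq: "ys k = ys' k"
  shows "(\<Sum>wh\<in>{wh\<in>PiE {1..K} M. wh k = m}. Z u wh w ys)
       = (\<Sum>wh\<in>{wh\<in>PiE {1..K} M. wh k = m}. Z u wh w ys')"
proof -
  have "{0,k} \<subseteq> {0..K}"
    using k by auto
  note no_signalling_0k = mp[OF spec[OF conjunct2[OF ns[unfolded is_NS_scheme_def]]] this]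
  have "(w, ys) \<in> ns_in K n M Y" and "(w, ys') \<in> ns_in K n M Y"
    using w ys ys' by (auto simp: ns_in_def)
  from bspec[OF bspec[OF no_signalling_0k this(1), unfolded prod.case] this(2), unfolded prod.case]
  have no_signalling: "ns_marg X K n M Z {0,k} w ys u wh0 = ns_marg X K n M Z {0,k} w ys' u wh0"
    if "wh0 \<in> PiE {1..K} M" for wh0
    using eq that u by (auto simp: ns_out_def)
  have "w(k := m) \<in> PiE {1..K} M"
    using PiE_fun_upd[OF m w] k by (simp add: insert_absorb)
  from no_signalling[OF this] show ?thesis
    by (simp add: ns_marg_receiver[OF k u])
qed

lemma Pe_NS_eq_if_BC_marginal_eq:
  assumes ns: "is_NS_scheme X K n M Y Z" and fin: "\<forall>j\<in>{1..K}. finite (Y j)"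
    and fin_M: "\<forall>j\<in>{1..K}. finite (M j)" and k: "k \<in> {1..K}"
    and marginal_eq: "\<forall>x\<in>X. \<forall>y\<in>Y k. BC_marginal K Y N k x y = BC_marginal K Y Nt k x y"
  shows "Pe_NS X K n M Y N Z k = Pe_NS X K n M Y Nt Z k"
  unfolding Pe_NS_def
proof (rule arg_cong[where f="(*) _"], rule sum.cong[OF refl], rule sum.cong[OF refl])
  fix w u assume w: "w \<in> PiE {1..K} M" and u: "u \<in> seqs n X"
  let ?err = "\<lambda>ys. \<Sum>wh\<in>{wh\<in>PiE {1..K} M. wh k \<noteq> w k}. Z u wh w ys"
  have "finite (PiE {1..K} M)"
    using fin_M by (intro finite_PiE) auto
  have err_grouped:
    "?err ys = (\<Sum>m\<in>M k - {w k}. \<Sum>wh\<in>{wh\<in>PiE {1..K} M. wh k = m}. Z u wh w ys)" for ys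
  proof -
    have "?err ys = (\<Sum>m\<in>M k - {w k}.
        \<Sum>wh\<in>{wh\<in>{wh\<in>PiE {1..K} M. wh k \<noteq> w k}. wh k = m}. Z u wh w ys)"
      using fin_M k \<open>finite (PiE {1..K} M)\<close> by (intro sum.group[symmetric]) auto
    also have "\<dots> = (\<Sum>m\<in>M k - {w k}. \<Sum>wh\<in>{wh\<in>PiE {1..K} M. wh k = m}. Z u wh w ys)"
      by (intro sum.cong) auto
    finally show ?thesis .
  qed
  have "?err ys = ?err ys'"
    if "ys \<in> out_seqs K n Y" "ys' \<in> out_seqs K n Y" "ys k = ys' k" for ys ys'
    unfolding err_grouped
    by (rule sum.cong[OF refl]) (erule DiffE, rule NS_scheme_receiver_local[OF ns k w u _ that])
  then have "(\<Sum>ys\<in>out_seqs K n Y. ?err ys * BC_n K n N u ys)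
      = (\<Sum>ys\<in>out_seqs K n Y. ?err ys * BC_n K n Nt u ys)"
    by (rule sum_BC_n_eq_if_BC_marginal_eq[OF fin k u marginal_eq])
  then show "(\<Sum>ys\<in>out_seqs K n Y. \<Sum>wh\<in>{wh\<in>PiE {1..K} M. wh k \<noteq> w k}. Z u wh w ys * BC_n K n N u ys)
      = (\<Sum>ys\<in>out_seqs K n Y. \<Sum>wh\<in>{wh\<in>PiE {1..K} M. wh k \<noteq> w k}. Z u wh w ys * BC_n K n Nt u ys)"
    by (simp only: sum_distrib_right)
qed

lemma Pe_classical_eq_if_BC_marginal_eq:
  assumes fin: "\<forall>j\<in>{1..K}. finite (Y j)" and k: "k \<in> {1..K}"
    and marginal_eq: "\<forall>x\<in>X. \<forall>y\<in>Y k. BC_marginal K Y N k x y = BC_marginal K Y Nt k x y"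
  shows "Pe_classical X K n M Y N phi psi k = Pe_classical X K n M Y Nt phi psi k"
  unfolding Pe_classical_def
proof (rule arg_cong[where f="(*) _"], rule sum.cong[OF refl], rule sum.cong[OF refl])
  fix w u assume u: "u \<in> seqs n X"
  let ?f = "\<lambda>ys. phi w u * (\<Sum>m\<in>M k - {w k}. psi k (ys k) m)"
  have "(\<Sum>ys\<in>out_seqs K n Y. ?f ys * BC_n K n N u ys)
      = (\<Sum>ys\<in>out_seqs K n Y. ?f ys * BC_n K n Nt u ys)"
    by (rule sum_BC_n_eq_if_BC_marginal_eq[OF fin k u marginal_eq]) simp
  then show "(\<Sum>ys\<in>out_seqs K n Y. phi w u * BC_n K n N u ys * (\<Sum>m\<in>M k - {w k}. psi k (ys k) m))
      = (\<Sum>ys\<in>out_seqs K n Y. phi w u * BC_n K n Nt u ys * (\<Sum>m\<in>M k - {w k}. psi k (ys k) m))"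
    by (simp only: mult_ac)
qed

theorem theorem2:
  fixes X :: "'x set" and K n :: nat and Y :: "nat \<Rightarrow> 'y set" and M :: "nat \<Rightarrow> 'm set"
    and N Nt :: "'x \<Rightarrow> (nat \<Rightarrow> 'y) \<Rightarrow> real"
  assumes "is_BC X K Y N" and "is_BC X K Y Nt"
    and "\<forall>k\<in>{1..K}. \<forall>x\<in>X. \<forall>yk\<in>Y k. BC_marginal K Y N k x yk = BC_marginal K Y Nt k x yk"
    and "\<forall>k\<in>{1..K}. finite (M k) \<and> M k \<noteq> {}"
  shows "(\<forall>Z. is_NS_scheme X K n M Y Z \<longrightarrow>
            (\<forall>k\<in>{1..K}. Pe_NS X K n M Y N Z k = Pe_NS X K n M Y Nt Z k)) \<and>
         (\<forall>phi psi. is_classical_scheme X K n M Y phi psi \<longrightarrow>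
            (\<forall>k\<in>{1..K}. Pe_classical X K n M Y N phi psi k = Pe_classical X K n M Y Nt phi psi k))"
proof -
  have fin: "\<forall>j\<in>{1..K}. finite (Y j)"
    using assms(1) unfolding is_BC_def by blast
  have fin_M: "\<forall>j\<in>{1..K}. finite (M j)"
    using assms(4) by blast
  show ?thesis
  proof (intro conjI allI impI ballI)
    fix Z k assume "is_NS_scheme X K n M Y Z" and "k \<in> {1..K}"
    with assms(3) show "Pe_NS X K n M Y N Z k = Pe_NS X K n M Y Nt Z k"
      by (intro Pe_NS_eq_if_BC_marginal_eq[OF _ fin fin_M]) auto
  next
    fix phi psi k assume "k \<in> {1..K}"
    with assms(3) show "Pe_classical X K n M Y N phi psi k = Pe_classical X K n M Y Nt phi psi k"
      by (intro Pe_classical_eq_if_BC_marginal_eq[OF fin]) auto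
  qed
qed

end
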